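(* Let $A=\{a_1^{k_1},\ldots,a_n^{k_n}\}$, $m\ge0$, $r=\max(k_1,\ldots,k_n)$, $s=\min(m,r)$, and let $\Lambda_m(A)$ be the set of tuples $(\lambda_1,\ldots,\lambda_s)$ of non-negative integers with $\sum_{i=1}^s i\lambda_i=m$ and $\sum_{i=j}^s\lambda_i\le\overline{k_j}$ for $j=1,\ldots,s$. Then the number of $m$-permutations of $A$ is $$|P_m(A)|=\sum_{\lambda\in\Lambda_m(A)}\frac{m!}{(1!)^{\lambda_1}(2!)^{\lambda_2}\cdots(s!)^{\lambda_s}}\prod_{j=1}^s\binom{\overline{k_j}-\sum_{i=j+1}^s\lambda_i}{\lambda_j}.$$
   Context: A multiset $A=\{a_1^{k_1},\ldots,a_n^{k_n}\}$ consists of distinct elements $a_1,\ldots,a_n$ with positive integer multiplicities $k_1,\ldots,k_n$. $P_m(A)$, the set of $m$-permutations of $A$, is the set of all sequences (words) of length $m$ over $\{a_1,\ldots,a_n\}$ in which each $a_i$ occurs at most $k_i$ times. For each integer $j\ge1$, $\overline{k_j}=|\{i\in\{1,\ldots,n\}: k_i\ge j\}|$. *)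

theory Defs
  imports Complex_Main
begin

text \<open>Multiset A = {a_0^(k 0), ..., a_(n-1)^(k (n-1))} with distinct elements a i.
  P_m(A): words of length m over {a i | i < n} with each a i occurring at most k i times.\<close>
definition mperms :: "(nat \<Rightarrow> 'a) \<Rightarrow> (nat \<Rightarrow> nat) \<Rightarrow> nat \<Rightarrow> nat \<Rightarrow> 'a list set" where
  "mperms a k n m = {w. length w = m \<and> set w \<subseteq> a ` {..<n} \<and>
                        (\<forall>i<n. count_list w (a i) \<le> k i)}"

definition kbar :: "(nat \<Rightarrow> nat) \<Rightarrow> nat \<Rightarrow> nat \<Rightarrow> nat" where
  "kbar k n j = card {i. i < n \<and> k i \<ge> j}"

definition Lam :: "(nat \<Rightarrow> nat) \<Rightarrow> nat \<Rightarrow> nat \<Rightarrow> nat \<Rightarrow> (nat \<Rightarrow> nat) set" where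
  "Lam k n m s = {l. (\<forall>i. i \<notin> {1..s} \<longrightarrow> l i = 0) \<and>
                     (\<Sum>i=1..s. i * l i) = m \<and>
                     (\<forall>j\<in>{1..s}. (\<Sum>i=j..s. l i) \<le> kbar k n j)}"

end

theory Submission
  imports Defs "HOL-Combinatorics.Multiset_Permutations"
begin

text \<open>A word in \<open>P\<^sub>m(A)\<close> is a permutation of the multiset in which \<open>a\<^sub>i\<close> occurs \<open>c\<^sub>i\<close> times,
  for a multiplicity vector \<open>c\<close> with \<open>c\<^sub>i \<le> k\<^sub>i\<close> and \<open>\<Sum> c\<^sub>i = m\<close>; there are \<open>m!/\<Prod> c\<^sub>i!\<close> of them.
  This number depends only on the type \<open>\<lambda>\<close> of \<open>c\<close>, \<open>\<lambda>\<^sub>j = #{i. c\<^sub>i = j}\<close>, being \<open>m!/\<Prod> (j!)^\<lambda>\<^sub>j\<close>.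
  The vectors of a given type are counted level by level from the top: the \<open>\<lambda>\<^sub>s\<close> letters of
  multiplicity \<open>s\<close> are chosen among the \<open>kbar s\<close> letters with \<open>k\<^sub>i \<ge> s\<close>, then the \<open>\<lambda>\<^sub>s\<^sub>-\<^sub>1\<close>
  letters of multiplicity \<open>s - 1\<close> among the \<open>kbar (s - 1) - \<lambda>\<^sub>s\<close> letters with \<open>k\<^sub>i \<ge> s - 1\<close>
  not yet used, and so on.\<close>

definition capped_vectors :: "'i set \<Rightarrow> ('i \<Rightarrow> nat) \<Rightarrow> nat \<Rightarrow> ('i \<Rightarrow> nat) set" where
  "capped_vectors I k s = {c \<in> I \<rightarrow>\<^sub>E {0..s}. \<forall>i\<in>I. c i \<le> k i}"

definition vectors_of_type :: "'i set \<Rightarrow> ('i \<Rightarrow> nat) \<Rightarrow> nat \<Rightarrow> (nat \<Rightarrow> nat) \<Rightarrow> ('i \<Rightarrow> nat) set" where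
  "vectors_of_type I k s l = {c \<in> capped_vectors I k s. \<forall>j\<in>{1..s}. card {i\<in>I. c i = j} = l j}"

lemma finite_capped_vectors: "finite I \<Longrightarrow> finite (capped_vectors I k s)"
  unfolding capped_vectors_def by (rule finite_subset[of _ "I \<rightarrow>\<^sub>E {0..s}"]) (auto intro: finite_PiE)

lemma vectors_of_type_0: "vectors_of_type I k 0 l = {restrict (\<lambda>_. 0) I}"
  unfolding vectors_of_type_def capped_vectors_def
  by (auto simp: PiE_def extensional_def restrict_def fun_eq_iff)

lemma vectors_of_type_top_level_bij:
  assumes S: "S \<subseteq> {i\<in>I. Suc s \<le> k i}" and card_S: "card S = l (Suc s)"
  shows "bij_betw (\<lambda>c. restrict c (I - S))
           {c \<in> vectors_of_type I k (Suc s) l. {i\<in>I. c i = Suc s} = S} (vectors_of_type (I - S) k s l)"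
proof (rule bij_betw_byWitness[where f' = "\<lambda>c i. if i \<in> S then Suc s else c i"])
  have levels: "{i\<in>I - S. c i = j} = {i\<in>I. c i = j}"
    if "{i\<in>I. c i = Suc s} = S" "j \<le> s" for c :: "'a \<Rightarrow> nat" and j
    using that by auto
  show "(\<lambda>c. restrict c (I - S)) ` {c \<in> vectors_of_type I k (Suc s) l. {i\<in>I. c i = Suc s} = S}
          \<subseteq> vectors_of_type (I - S) k s l"
  proof (rule image_subsetI, elim CollectE conjE)
    fix c assume c: "c \<in> vectors_of_type I k (Suc s) l" and top: "{i\<in>I. c i = Suc s} = S"
    then have "restrict c (I - S) \<in> (I - S) \<rightarrow>\<^sub>E {0..s}"
      by (fastforce simp: vectors_of_type_def capped_vectors_def le_Suc_eq)
    moreover have "{i\<in>I - S. restrict c (I - S) i = j} = {i\<in>I. c i = j}" if "j \<le> s" for j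
      using levels[OF top that] by auto
    ultimately show "restrict c (I - S) \<in> vectors_of_type (I - S) k s l"
      using c by (auto simp: vectors_of_type_def capped_vectors_def)
  qed
  show "(\<lambda>c i. if i \<in> S then Suc s else c i) ` vectors_of_type (I - S) k s l
          \<subseteq> {c \<in> vectors_of_type I k (Suc s) l. {i\<in>I. c i = Suc s} = S}"
  proof (rule image_subsetI)
    fix c assume "c \<in> vectors_of_type (I - S) k s l"
    then have c: "c \<in> (I - S) \<rightarrow>\<^sub>E {0..s}" "\<forall>i\<in>I - S. c i \<le> k i"
      "\<forall>j\<in>{1..s}. card {i\<in>I - S. c i = j} = l j"
      by (auto simp: vectors_of_type_def capped_vectors_def)
    define c' where "c' i = (if i \<in> S then Suc s else c i)" for i
    have top: "{i\<in>I. c' i = Suc s} = S"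
      using S c(1) by (force simp: c'_def)
    moreover have "c' \<in> I \<rightarrow>\<^sub>E {0..Suc s}"
      using S c(1) by (force simp: c'_def PiE_def Pi_def extensional_def)
    moreover have "card {i\<in>I. c' i = j} = l j" if "j \<in> {1..Suc s}" for j
    proof (cases "j = Suc s")
      case False
      then have "{i\<in>I. c' i = j} = {i\<in>I - S. c i = j}"
        by (auto simp: c'_def)
      with that False c(3) show ?thesis by auto
    qed (use top card_S in simp)
    ultimately show "c' \<in> {c \<in> vectors_of_type I k (Suc s) l. {i\<in>I. c i = Suc s} = S}"
      using S c(2) by (auto simp: vectors_of_type_def capped_vectors_def c'_def)
  qed
qed (use S in \<open>auto simp: vectors_of_type_def capped_vectors_def PiE_def extensional_def fun_eq_iff\<close>)

lemma card_vectors_of_type: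
  assumes "finite I"
  shows "card (vectors_of_type I k s l) =
           (\<Prod>j=1..s. (card {i\<in>I. j \<le> k i} - (\<Sum>t=j+1..s. l t)) choose l j)"
  using assms
proof (induction s arbitrary: I)
  case 0
  then show ?case by (simp add: vectors_of_type_0)
next
  case (Suc s)
  define K where "K = {i\<in>I. Suc s \<le> k i}"
  define T where "T = {S. S \<subseteq> K \<and> card S = l (Suc s)}"
  define top where "top c = {i\<in>I. c i = Suc s}" for c :: "'a \<Rightarrow> nat"
  define P where "P = (\<Prod>j=1..s. (card {i\<in>I. j \<le> k i} - (\<Sum>t=j+1..Suc s. l t)) choose l j)"
  have "finite K" using Suc.prems by (simp add: K_def)
  have top_T: "top ` vectors_of_type I k (Suc s) l \<subseteq> T"
    by (force simp: T_def K_def top_def vectors_of_type_def capped_vectors_def)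
  have fibre: "card {c \<in> vectors_of_type I k (Suc s) l. top c = S} = P" if "S \<in> T" for S
  proof -
    have SK: "S \<subseteq> K" and card_S: "card S = l (Suc s)" using that by (auto simp: T_def)
    have "card {c \<in> vectors_of_type I k (Suc s) l. top c = S} = card (vectors_of_type (I - S) k s l)"
      using vectors_of_type_top_level_bij[of S I s k l] SK card_S
      by (auto simp: K_def top_def intro: bij_betw_same_card)
    also have "\<dots> = (\<Prod>j=1..s. (card {i\<in>I - S. j \<le> k i} - (\<Sum>t=j+1..s. l t)) choose l j)"
      using Suc by simp
    also have "\<dots> = P" unfolding P_def
    proof (rule prod.cong[OF refl])
      fix j assume j: "j \<in> {1..s}"
      have "{i\<in>I - S. j \<le> k i} = {i\<in>I. j \<le> k i} - S" "S \<subseteq> {i\<in>I. j \<le> k i}"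
        using SK j by (auto simp: K_def)
      then have "card {i\<in>I - S. j \<le> k i} = card {i\<in>I. j \<le> k i} - l (Suc s)"
        using Suc.prems card_S by (simp add: card_Diff_subset finite_subset)
      then show "(card {i\<in>I - S. j \<le> k i} - (\<Sum>t=j+1..s. l t)) choose l j =
          (card {i\<in>I. j \<le> k i} - (\<Sum>t=j+1..Suc s. l t)) choose l j"
        using j by (simp add: add.commute)
    qed
    finally show ?thesis .
  qed
  have "card (vectors_of_type I k (Suc s) l) =
          (\<Sum>S\<in>T. card {c \<in> vectors_of_type I k (Suc s) l. top c = S})"
    using card_eq_sum sum.group[OF _ _ top_T, of "\<lambda>_. 1::nat"] Suc.prems \<open>finite K\<close>
    by (simp add: T_def vectors_of_type_def finite_capped_vectors)
  also have "\<dots> = (card K choose l (Suc s)) * P"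
    using fibre n_subsets[OF \<open>finite K\<close>] by (simp add: T_def)
  also have "\<dots> = (\<Prod>j=1..Suc s. (card {i\<in>I. j \<le> k i} - (\<Sum>t=j+1..Suc s. l t)) choose l j)"
    by (simp add: P_def K_def prod.cl_ivl_Suc)
  finally show ?case .
qed

lemma sum_eq_sum_level_counts:
  assumes "finite N" and "c ` N \<subseteq> {0..s}"
  shows "(\<Sum>i\<in>N. c i) = (\<Sum>j=1..s. j * card {i\<in>N. c i = j})"
proof -
  have "(\<Sum>i\<in>N. c i) = (\<Sum>j=0..s. \<Sum>i\<in>{i\<in>N. c i = j}. c i)"
    by (rule sum.group[OF assms(1) finite_atLeastAtMost assms(2), symmetric])
  also have "\<dots> = (\<Sum>j=0..s. j * card {i\<in>N. c i = j})"
    by (rule sum.cong) auto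
  finally show ?thesis by (simp add: sum.atLeast_Suc_atMost)
qed

lemma prod_fact_eq_prod_level_counts:
  assumes "finite N" and "c ` N \<subseteq> {0..s}"
  shows "(\<Prod>i\<in>N. fact (c i)) =
           (\<Prod>j=1..s. fact j ^ card {i\<in>N. c i = j} :: 'b::{comm_semiring_1,semiring_char_0})"
proof -
  have "(\<Prod>i\<in>N. fact (c i)) = (\<Prod>j=0..s. \<Prod>i\<in>{i\<in>N. c i = j}. fact (c i) :: 'b)"
    by (rule prod.group[OF assms(1) finite_atLeastAtMost assms(2), symmetric])
  also have "\<dots> = (\<Prod>j=0..s. fact j ^ card {i\<in>N. c i = j})"
    by (rule prod.cong) auto
  finally show ?thesis by (simp add: prod.atLeast_Suc_atMost)
qed

lemma sum_level_counts_from: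
  fixes c :: "'a \<Rightarrow> nat"
  assumes "finite N" and "c ` N \<subseteq> {0..s}"
  shows "(\<Sum>t=j..s. card {i\<in>N. c i = t}) = card {i\<in>N. j \<le> c i}"
proof -
  let ?S = "{i\<in>N. j \<le> c i}"
  have "finite ?S" "c ` ?S \<subseteq> {j..s}" using assms by auto
  then have "card ?S = (\<Sum>t=j..s. \<Sum>i\<in>{i\<in>?S. c i = t}. 1)"
    using sum.group[of ?S "{j..s}" c "\<lambda>_. 1::nat"] by auto
  also have "\<dots> = (\<Sum>t=j..s. card {i\<in>N. c i = t})"
    by (rule sum.cong) (auto intro!: arg_cong[where f = card])
  finally show ?thesis ..
qed

definition multiset_of_counts :: "('i \<Rightarrow> 'a) \<Rightarrow> 'i set \<Rightarrow> ('i \<Rightarrow> nat) \<Rightarrow> 'a multiset" where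
  "multiset_of_counts a N c = (\<Sum>i\<in>N. replicate_mset (c i) (a i))"

lemma count_multiset_of_counts:
  assumes "finite N" "inj_on a N" "j \<in> N"
  shows "count (multiset_of_counts a N c) (a j) = c j"
proof -
  have "count (multiset_of_counts a N c) (a j) = (\<Sum>i\<in>N. if i = j then c i else 0)"
    unfolding multiset_of_counts_def count_sum
    using assms(2,3) by (intro sum.cong) (auto dest: inj_onD)
  then show ?thesis using assms(1,3) by simp
qed

lemma count_multiset_of_counts_outside:
  "x \<notin> a ` N \<Longrightarrow> count (multiset_of_counts a N c) x = 0"
  unfolding multiset_of_counts_def count_sum by (intro sum.neutral) auto

lemma set_mset_multiset_of_counts: "set_mset (multiset_of_counts a N c) \<subseteq> a ` N"
  using count_multiset_of_counts_outside by (metis count_eq_zero_iff subsetI)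

lemma size_multiset_of_counts: "size (multiset_of_counts a N c) = (\<Sum>i\<in>N. c i)"
  by (simp add: multiset_of_counts_def)

lemma inj_on_multiset_of_counts:
  assumes "finite N" "inj_on a N"
  shows "inj_on (multiset_of_counts a N) (extensional N)"
proof (rule inj_onI)
  fix c d assume "c \<in> extensional N" "d \<in> extensional N"
    and "multiset_of_counts a N c = multiset_of_counts a N d"
  then show "c = d"
    using count_multiset_of_counts[OF assms] by (metis extensionalityI)
qed

lemma card_permutations_multiset_of_counts:
  assumes "finite N" "inj_on a N"
  shows "card (permutations_of_multiset (multiset_of_counts a N c)) * (\<Prod>i\<in>N. fact (c i))
           = fact (\<Sum>i\<in>N. c i)"
proof -
  let ?M = "multiset_of_counts a N c"
  have "(\<Prod>x\<in>set_mset ?M. fact (count ?M x)) = (\<Prod>x\<in>a ` N. fact (count ?M x) :: nat)"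
    using set_mset_multiset_of_counts[of a N c] assms(1)
    by (intro prod.mono_neutral_left) (auto simp: not_in_iff)
  also have "\<dots> = (\<Prod>i\<in>N. fact (c i))"
    using assms by (simp add: prod.reindex count_multiset_of_counts)
  finally show ?thesis
    using card_permutations_of_multiset_aux[of ?M] by (simp add: size_multiset_of_counts)
qed

definition bounded_compositions :: "'i set \<Rightarrow> ('i \<Rightarrow> nat) \<Rightarrow> nat \<Rightarrow> nat \<Rightarrow> ('i \<Rightarrow> nat) set" where
  "bounded_compositions I k s m = {c \<in> capped_vectors I k s. (\<Sum>i\<in>I. c i) = m}"

lemma finite_bounded_compositions: "finite I \<Longrightarrow> finite (bounded_compositions I k s m)"
  unfolding bounded_compositions_def by (simp add: finite_capped_vectors)

lemma mperms_eq_UN_permutations_of_multiset: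
  assumes inj: "inj_on a {..<n}" and s: "\<forall>i<n. min m (k i) \<le> s"
  shows "mperms a k n m = (\<Union>c \<in> bounded_compositions {..<n} k s m.
           permutations_of_multiset (multiset_of_counts a {..<n} c))"
proof (intro equalityI subsetI)
  fix w assume "w \<in> mperms a k n m"
  then have len: "length w = m" and set: "set w \<subseteq> a ` {..<n}"
    and bounded: "\<forall>i<n. count_list w (a i) \<le> k i"
    by (auto simp: mperms_def)
  define c where "c = restrict (\<lambda>i. count_list w (a i)) {..<n}"
  have mset: "mset w = multiset_of_counts a {..<n} c"
  proof (rule multiset_eqI)
    fix x show "count (mset w) x = count (multiset_of_counts a {..<n} c) x"
    proof (cases "x \<in> a ` {..<n}")
      case True
      then show ?thesis using count_multiset_of_counts[OF _ inj] by (auto simp: c_def count_mset)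
    next
      case False
      with set have "x \<notin> set w" by auto
      with False show ?thesis
        by (simp add: count_multiset_of_counts_outside count_mset count_list_0_iff)
    qed
  qed
  then have sum: "(\<Sum>i<n. c i) = m"
    using len size_multiset_of_counts[of a "{..<n}" c] by (metis size_mset)
  have "c i \<le> s" if "i < n" for i
    using member_le_sum[of i "{..<n}" c] sum bounded s that by (force simp: c_def)
  with bounded sum have "c \<in> bounded_compositions {..<n} k s m"
    by (auto simp: bounded_compositions_def capped_vectors_def c_def)
  with mset show "w \<in> (\<Union>c \<in> bounded_compositions {..<n} k s m.
           permutations_of_multiset (multiset_of_counts a {..<n} c))"
    by (auto intro: permutations_of_multisetI)
next
  fix w assume "w \<in> (\<Union>c \<in> bounded_compositions {..<n} k s m.
           permutations_of_multiset (multiset_of_counts a {..<n} c))"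
  then obtain c where c: "c \<in> bounded_compositions {..<n} k s m"
    and mset: "mset w = multiset_of_counts a {..<n} c"
    by (auto dest: permutations_of_multisetD)
  have "length w = m"
    using c mset size_multiset_of_counts[of a "{..<n}" c]
    by (metis (mono_tags, lifting) bounded_compositions_def mem_Collect_eq size_mset)
  moreover have "set w \<subseteq> a ` {..<n}"
    using mset set_mset_multiset_of_counts[of a "{..<n}" c] by (metis set_mset_mset)
  moreover have "count_list w (a i) \<le> k i" if "i < n" for i
    using c mset count_multiset_of_counts[OF _ inj, of i c] that
    by (auto simp: bounded_compositions_def capped_vectors_def simp flip: count_mset)
  ultimately show "w \<in> mperms a k n m" by (simp add: mperms_def)
qed

lemma card_mperms:
  assumes "inj_on a {..<n}" and "\<forall>i<n. min m (k i) \<le> s"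
  shows "card (mperms a k n m) = (\<Sum>c \<in> bounded_compositions {..<n} k s m.
           card (permutations_of_multiset (multiset_of_counts a {..<n} c)))"
proof -
  have "inj_on (multiset_of_counts a {..<n}) (bounded_compositions {..<n} k s m)"
    using inj_on_multiset_of_counts[OF _ assms(1)]
    by (rule inj_on_subset) (auto simp: bounded_compositions_def capped_vectors_def PiE_def)
  then have "permutations_of_multiset (multiset_of_counts a {..<n} c)
      \<inter> permutations_of_multiset (multiset_of_counts a {..<n} d) = {}"
    if "c \<in> bounded_compositions {..<n} k s m" "d \<in> bounded_compositions {..<n} k s m" "c \<noteq> d"
    for c d
    using that by (metis disjoint_iff permutations_of_multisetD inj_onD)
  then show ?thesis
    unfolding mperms_eq_UN_permutations_of_multiset[OF assms]
    by (subst card_UN_disjoint) (auto simp: finite_bounded_compositions)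
qed

definition vector_type :: "'i set \<Rightarrow> nat \<Rightarrow> ('i \<Rightarrow> nat) \<Rightarrow> nat \<Rightarrow> nat" where
  "vector_type I s c j = (if j \<in> {1..s} then card {i\<in>I. c i = j} else 0)"

lemma card_permutations_multiset_of_counts_by_type:
  assumes "finite N" "inj_on a N" "c \<in> bounded_compositions N k s m"
  shows "(of_nat (card (permutations_of_multiset (multiset_of_counts a N c))) :: 'b::field_char_0)
           = fact m / (\<Prod>j=1..s. fact j ^ vector_type N s c j)"
proof -
  have range: "c ` N \<subseteq> {0..s}" and sum: "(\<Sum>i\<in>N. c i) = m"
    using assms(3) by (auto simp: bounded_compositions_def capped_vectors_def)
  have "(\<Prod>i\<in>N. fact (c i) :: 'b) = (\<Prod>j=1..s. fact j ^ vector_type N s c j)"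
    unfolding prod_fact_eq_prod_level_counts[OF assms(1) range] vector_type_def by simp
  moreover have "of_nat (card (permutations_of_multiset (multiset_of_counts a N c)))
                   * (\<Prod>i\<in>N. fact (c i) :: 'b) = fact m"
    using arg_cong[OF card_permutations_multiset_of_counts[OF assms(1,2), of c], of "of_nat :: nat \<Rightarrow> 'b"]
    by (simp add: sum of_nat_prod)
  moreover have "(\<Prod>j=1..s. fact j ^ vector_type N s c j :: 'b) \<noteq> 0"
    by simp
  ultimately show ?thesis
    by (simp add: eq_divide_eq)
qed

lemma vector_type_in_Lam:
  assumes "c \<in> bounded_compositions {..<n} k s m"
  shows "vector_type {..<n} s c \<in> Lam k n m s"
proof -
  have range: "c ` {..<n} \<subseteq> {0..s}" and bounded: "\<forall>i<n. c i \<le> k i"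
    and sum: "(\<Sum>i<n. c i) = m"
    using assms by (auto simp: bounded_compositions_def capped_vectors_def)
  have "(\<Sum>i=j..s. vector_type {..<n} s c i) \<le> kbar k n j" if "j \<in> {1..s}" for j
  proof -
    have "(\<Sum>i=j..s. vector_type {..<n} s c i) = card {i\<in>{..<n}. j \<le> c i}"
      using that sum_level_counts_from[OF _ range, of j] by (simp add: vector_type_def)
    also have "\<dots> \<le> kbar k n j"
      unfolding kbar_def using bounded by (intro card_mono) auto
    finally show ?thesis .
  qed
  moreover have "(\<Sum>i=1..s. i * vector_type {..<n} s c i) = m"
    using sum_eq_sum_level_counts[OF _ range] sum by (simp add: vector_type_def)
  ultimately show ?thesis
    by (simp add: Lam_def vector_type_def)
qed

lemma vectors_of_type_eq_compositions_of_type: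
  assumes "l \<in> Lam k n m s"
  shows "vectors_of_type {..<n} k s l = {c \<in> bounded_compositions {..<n} k s m. vector_type {..<n} s c = l}"
proof -
  have zero: "\<forall>j. j \<notin> {1..s} \<longrightarrow> l j = 0" and weight: "(\<Sum>j=1..s. j * l j) = m"
    using assms by (auto simp: Lam_def)
  show ?thesis
  proof (intro equalityI subsetI)
    fix c assume c: "c \<in> vectors_of_type {..<n} k s l"
    then have "c ` {..<n} \<subseteq> {0..s}" and levels: "\<forall>j\<in>{1..s}. card {i\<in>{..<n}. c i = j} = l j"
      by (auto simp: vectors_of_type_def capped_vectors_def)
    then have "(\<Sum>i<n. c i) = m"
      using sum_eq_sum_level_counts[of "{..<n}" c s] weight by simp
    moreover have "vector_type {..<n} s c = l"
      using levels zero by (auto simp: vector_type_def)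
    ultimately show "c \<in> {c \<in> bounded_compositions {..<n} k s m. vector_type {..<n} s c = l}"
      using c by (simp add: vectors_of_type_def bounded_compositions_def)
  next
    fix c assume "c \<in> {c \<in> bounded_compositions {..<n} k s m. vector_type {..<n} s c = l}"
    then show "c \<in> vectors_of_type {..<n} k s l"
      by (auto simp: vectors_of_type_def bounded_compositions_def vector_type_def)
  qed
qed

lemma finite_Lam: "finite (Lam k n m s)"
proof (rule finite_subset)
  show "Lam k n m s \<subseteq> (\<lambda>f j. if j \<in> {1..s} then f j else 0) ` ({1..s} \<rightarrow>\<^sub>E {0..m})"
  proof
    fix l assume "l \<in> Lam k n m s"
    then have zero: "\<forall>j. j \<notin> {1..s} \<longrightarrow> l j = 0" and weight: "(\<Sum>j=1..s. j * l j) = m"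
      by (auto simp: Lam_def)
    have "l j \<le> m" if "j \<in> {1..s}" for j
    proof -
      have "l j \<le> j * l j" using that by simp
      also have "\<dots> \<le> m" using weight member_le_sum[OF that, of "\<lambda>j. j * l j"] by simp
      finally show ?thesis .
    qed
    then have "restrict l {1..s} \<in> {1..s} \<rightarrow>\<^sub>E {0..m}"
      by auto
    moreover have "l = (\<lambda>j. if j \<in> {1..s} then restrict l {1..s} j else 0)"
      using zero by auto
    ultimately show "l \<in> (\<lambda>f j. if j \<in> {1..s} then f j else 0) ` ({1..s} \<rightarrow>\<^sub>E {0..m})"
      by blast
  qed
qed (auto intro: finite_PiE)

theorem theorem7p1:
  fixes a :: "nat \<Rightarrow> 'a" and k :: "nat \<Rightarrow> nat" and n m :: nat
  assumes "n \<ge> 1"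
    and "inj_on a {..<n}"
    and "\<forall>i<n. k i > 0"
  defines "r \<equiv> Max (k ` {..<n})"
  defines "s \<equiv> min m r"
  shows "(of_nat (card (mperms a k n m)) :: rat) =
    (\<Sum>l\<in>Lam k n m s.
       (fact m / (\<Prod>i=1..s. (fact i) ^ (l i))) *
       (\<Prod>j=1..s. of_nat ((kbar k n j - (\<Sum>i=j+1..s. l i)) choose (l j))))"
proof -
  let ?C = "bounded_compositions {..<n} k s m"
  let ?weight = "\<lambda>l. fact m / (\<Prod>i=1..s. fact i ^ l i) :: rat"
  have "k i \<le> r" if "i < n" for i
    unfolding r_def using that by (intro Max_ge) auto
  then have "\<forall>i<n. min m (k i) \<le> s"
    by (simp add: s_def min.coboundedI2)
  then have "of_nat (card (mperms a k n m)) = (\<Sum>c\<in>?C. ?weight (vector_type {..<n} s c))"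
    using card_mperms[OF assms(2)] card_permutations_multiset_of_counts_by_type[OF _ assms(2), where 'b = rat]
    by (simp add: of_nat_sum cong: sum.cong)
  also have "\<dots> = (\<Sum>l\<in>Lam k n m s. \<Sum>c\<in>{c\<in>?C. vector_type {..<n} s c = l}. ?weight (vector_type {..<n} s c))"
    by (rule sum.group[symmetric])
       (auto simp: finite_bounded_compositions finite_Lam vector_type_in_Lam)
  also have "\<dots> = (\<Sum>l\<in>Lam k n m s. ?weight l * of_nat (card (vectors_of_type {..<n} k s l)))"
    by (intro sum.cong) (simp_all add: vectors_of_type_eq_compositions_of_type)
  also have "\<dots> = (\<Sum>l\<in>Lam k n m s. ?weight l *
       (\<Prod>j=1..s. of_nat ((kbar k n j - (\<Sum>i=j+1..s. l i)) choose (l j))))"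
    by (simp add: card_vectors_of_type kbar_def of_nat_prod)
  finally show ?thesis .
qed

end
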